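(* Let $M,N$ be equivalent canonical dtlas such that $M$ is a dtpla and $N$ is a dtop, and let $\varphi$ be the aheadness mapping from $N$ to $M$. Then (1) $A_N\Phi=\sqcap\{A_M(p)\Omega\mid p\in P_M\}$, and (2) for every $v\in\mathbb N_+^*$, $q\in Q_N$ and $p\in P_M$: if $A_N/v=q(x_0)$ then $\varphi(q,p)=A_M(p)\Omega/v$.
   Context: Trees and patterns. $T_\Delta(Z)$ is the set of trees over ranked alphabet $\Delta$ with extra nullary symbols $Z$; $t/v$ is the subtree at node $v\in\mathbb N_+^*$; $\bot$ is a special nullary symbol. $\sqcap T$ is the greatest lower bound of a finite nonempty set $T$ of trees w.r.t. the order $t\sqsubseteq t'$ ($t'$ obtained from $t$ by replacing occurrences of $\bot$ by trees): the largest common prefix with $\bot$ at the highest nodes of disagreement. A $\Sigma$-context is $C\in T_\Sigma(\{\bot\})$ with exactly one $\bot$; $\mathcal C_\Sigma$ is their set. $Q(Y)=\{q(y)\mid q\in Q,y\in Y\}$, $X=\{x_0,x_1,\dots\}$, $X_k=\{x_1,\dots,x_k\}$. Dtlas. A dtla $M$ from $\Sigma$ to $\Delta$ consists of a finite set $Q_M$ of states, a total deterministic bottom-up tree automaton with finite state set $P_M$ and transitions $\delta(a,p_1,\dots,p_k)$, extended to $\delta_M:T_\Sigma\to P_M$ ($[\![p]\!]_M=\delta_M^{-1}(p)$), axioms $A_M(p)\in T_\Delta(Q_M(\{x_0\}))$, and at most one rule $q(a(x_1\langle p_1\rangle,\dots,x_k\langle p_k\rangle))\to\mathrm{rhs}_M(q,a,p_1,\dots,p_k)\in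 T_\Delta(Q_M(X_k))$ per $q,a,p_1,\dots,p_k$. Semantics: $q_M(a(s_1,\dots,s_k))=\mathrm{rhs}_M(q,a,\delta_M(s_1),\dots,\delta_M(s_k))[q'(x_i)\leftarrow q'_M(s_i)]$, $M(s)=A_M(\delta_M(s))[q(x_0)\leftarrow q_M(s)]$; equivalent means equal translations. A dtop is a dtla with a single look-ahead state $\bot$; for a dtop $N$ its unique axiom is $A_N\in T_\Delta(Q_N(\{x_0\}))$. A dtpla has $|P_M|\ge2$. $M(C[p])\in T_\Delta(Q_M\times P_M)$ is the output on $C\in\mathcal C_\Sigma$ with the hole treated as a leaf of look-ahead state $p$ and $q_M(p)=\langle q,p\rangle$; $N(C)=N(C[\bot])$. A state $q$ is reachable if $\langle q,p\rangle$ labels a node of $M(C[p])$ for some $C,p$. $M$ is la-uniform if there is $\rho_M:Q_M\to P_M$ with domain of $[\![q]\!]_M$ equal to $[\![\rho_M(q)]\!]_M$, every $q(x_0)$ in $A_M(p)$ having $\rho_M(q)=p$, every $q'(x_i)$ in $\mathrm{rhs}_M(q,a,p_1,\dots,p_k)$ having $\rho_M(q')=p_i$, and the rule for $q,a,p_1,\dots,p_k$ existing iff $\delta(a,p_1,\dots,p_k)=\rho_M(q)$ (for a dtop, $\rho(q)=\bot$). Earliest: no state $q$ and $d\in\Delta$ such that $q(s)$ has root label $d$ for all $s$ in the domain of $[\![q]\!]$. Canonical: total, la-uniform, earliest, all states reachable, distinct states have distinct translations. For $t\in T_\Delta(Q(X))$ of an la-uniform dtla, $t\Omega$ replaces every $q(x_i)$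 by the leaf $\langle q,\rho(q)\rangle$ (for a dtop, by $\langle q,\bot\rangle$). For $t\in T_\Delta(Q_N(X))$, $t\Phi$ replaces every $q(x_i)$ by $\bot$. Aheadness mapping: the unique $\varphi:Q_N\times P_M\to T_\Delta(Q_M\times P_M)$ with $M(C[p])=N(C)[\langle q,\bot\rangle\leftarrow\varphi(q,p)\mid q\in Q_N]$ for all $C\in\mathcal C_\Sigma$, $p\in P_M$. *)

theory Defs
  imports Main
begin

text \<open>Trees over a ranked alphabet with extra nullary symbols: Bot is the special
nullary symbol \<bottom>, Leaf z is an extra nullary symbol z \<in> Z, Sym f ts is a node
labelled f with children ts.\<close>

datatype ('f, 'z) tm = Bot | Leaf 'z | Sym 'f "('f, 'z) tm list"

text \<open>Well-formedness: t \<in> T_F(Z) (b = False) or t \<in> T_F(Z \<union> {\<bottom>}) (b = True),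
for a ranked alphabet given by a symbol set F and a rank function r.\<close>
fun wf :: "'f set \<Rightarrow> ('f \<Rightarrow> nat) \<Rightarrow> 'z set \<Rightarrow> bool \<Rightarrow> ('f, 'z) tm \<Rightarrow> bool" where
  "wf F r Z b Bot = b"
| "wf F r Z b (Leaf z) = (z \<in> Z)"
| "wf F r Z b (Sym f ts) = (f \<in> F \<and> length ts = r f \<and> (\<forall>t\<in>set ts. wf F r Z b t))"

fun leaves :: "('f, 'z) tm \<Rightarrow> 'z set" where
  "leaves Bot = {}"
| "leaves (Leaf z) = {z}"
| "leaves (Sym f ts) = \<Union> (leaves ` set ts)"

fun nbot :: "('f, 'z) tm \<Rightarrow> nat" where
  "nbot Bot = 1"
| "nbot (Leaf z) = 0"
| "nbot (Sym f ts) = sum_list (map nbot ts)"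

fun subst :: "('z \<Rightarrow> ('f, 'w) tm) \<Rightarrow> ('f, 'z) tm \<Rightarrow> ('f, 'w) tm" where
  "subst \<sigma> Bot = Bot"
| "subst \<sigma> (Leaf z) = \<sigma> z"
| "subst \<sigma> (Sym f ts) = Sym f (map (subst \<sigma>) ts)"

text \<open>C[p]: replace the hole \<bottom> of a context C by a leaf p (contexts have no
extra leaves, so the Leaf case is irrelevant).\<close>
fun plug :: "('f, 'y) tm \<Rightarrow> 'z \<Rightarrow> ('f, 'z) tm" where
  "plug Bot p = Leaf p"
| "plug (Leaf y) p = Bot"
| "plug (Sym f ts) p = Sym f (map (\<lambda>t. plug t p) ts)"

fun subt :: "('f, 'z) tm \<Rightarrow> nat list \<Rightarrow> ('f, 'z) tm option" where
  "subt t [] = Some t"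
| "subt (Sym f ts) (i # v) = (if 1 \<le> i \<and> i \<le> length ts then subt (ts ! (i - 1)) v else None)"
| "subt Bot (i # v) = None"
| "subt (Leaf z) (i # v) = None"

inductive below :: "('f, 'z) tm \<Rightarrow> ('f, 'z) tm \<Rightarrow> bool" where
  "below Bot t"
| "below (Leaf z) (Leaf z)"
| "list_all2 below ts us \<Longrightarrow> below (Sym f ts) (Sym f us)"

definition glb :: "('f, 'z) tm set \<Rightarrow> ('f, 'z) tm" where
  "glb T = (THE g. (\<forall>t\<in>T. below g t) \<and> (\<forall>g'. (\<forall>t\<in>T. below g' t) \<longrightarrow> below g' g))"

text \<open>A leaf (q, i) in an axiom / right-hand side stands for q(x_i).
rhs M q a ps = None means that there is no rule for q, a, ps.\<close>
record ('q, 'p, 'a, 'd) dtla =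
  Q :: "'q set"
  P :: "'p set"
  del :: "'a \<Rightarrow> 'p list \<Rightarrow> 'p"
  Ax :: "'p \<Rightarrow> ('d, 'q \<times> nat) tm"
  rhs :: "'q \<Rightarrow> 'a \<Rightarrow> 'p list \<Rightarrow> ('d, 'q \<times> nat) tm option"

definition is_dtla :: "'a set \<Rightarrow> ('a \<Rightarrow> nat) \<Rightarrow> 'd set \<Rightarrow> ('d \<Rightarrow> nat)
    \<Rightarrow> ('q, 'p, 'a, 'd) dtla \<Rightarrow> bool" where
  "is_dtla Sig rkS Dl rkD M \<longleftrightarrow>
     finite (Q M) \<and> finite (P M) \<and> P M \<noteq> {} \<and>
     (\<forall>a\<in>Sig. \<forall>ps. length ps = rkS a \<and> set ps \<subseteq> P M \<longrightarrow> del M a ps \<in> P M) \<and>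
     (\<forall>p\<in>P M. wf Dl rkD (Q M \<times> {0}) False (Ax M p)) \<and>
     (\<forall>q\<in>Q M. \<forall>a\<in>Sig. \<forall>ps r. length ps = rkS a \<and> set ps \<subseteq> P M \<and> rhs M q a ps = Some r
        \<longrightarrow> wf Dl rkD (Q M \<times> {1..rkS a}) False r)"

text \<open>Look-ahead state of an input tree whose leaves (holes) h carry look-ahead
state \<eta> h.\<close>
fun deltaE :: "('q, 'p, 'a, 'd) dtla \<Rightarrow> ('h \<Rightarrow> 'p) \<Rightarrow> ('a, 'h) tm \<Rightarrow> 'p" where
  "deltaE M \<eta> Bot = undefined"
| "deltaE M \<eta> (Leaf h) = \<eta> h"
| "deltaE M \<eta> (Sym a ss) = del M a (map (deltaE M \<eta>) ss)"

text \<open>Semantics (relational): qsem M \<eta> hol q s t means q_M(s) = t, where a hole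
leaf h of s is translated by state q into hol q h.\<close>
inductive qsem :: "('q, 'p, 'a, 'd) dtla \<Rightarrow> ('h \<Rightarrow> 'p) \<Rightarrow> ('q \<Rightarrow> 'h \<Rightarrow> ('d, 'w) tm)
    \<Rightarrow> 'q \<Rightarrow> ('a, 'h) tm \<Rightarrow> ('d, 'w) tm \<Rightarrow> bool"
  for M \<eta> hol where
  leaf: "qsem M \<eta> hol q (Leaf h) (hol q h)"
| node: "rhs M q a (map (deltaE M \<eta>) ss) = Some r \<Longrightarrow>
    \<forall>z\<in>leaves r. 1 \<le> snd z \<and> snd z \<le> length ss \<and> qsem M \<eta> hol (fst z) (ss ! (snd z - 1)) (\<sigma> z) \<Longrightarrow>
    qsem M \<eta> hol q (Sym a ss) (subst \<sigma> r)"

definition msem :: "('q, 'p, 'a, 'd) dtla \<Rightarrow> ('h \<Rightarrow> 'p) \<Rightarrow> ('q \<Rightarrow> 'h \<Rightarrow> ('d, 'w) tm)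
    \<Rightarrow> ('a, 'h) tm \<Rightarrow> ('d, 'w) tm \<Rightarrow> bool" where
  "msem M \<eta> hol s t \<longleftrightarrow> (\<exists>\<sigma>. (\<forall>z\<in>leaves (Ax M (deltaE M \<eta> s)). qsem M \<eta> hol (fst z) s (\<sigma> z))
      \<and> t = subst \<sigma> (Ax M (deltaE M \<eta> s)))"

definition the_opt :: "('b \<Rightarrow> bool) \<Rightarrow> 'b option" where
  "the_opt R = (if \<exists>t. R t then Some (THE t. R t) else None)"

text \<open>Ground input trees T_\<Sigma> (represented in type ('a, unit) tm, no holes) and
ground outputs in T_\<Delta> (type ('d, unit) tm).\<close>
definition GT :: "'a set \<Rightarrow> ('a \<Rightarrow> nat) \<Rightarrow> ('a, unit) tm set" where
  "GT Sig rk = {s. wf Sig rk {} False s}"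

definition Ctx :: "'a set \<Rightarrow> ('a \<Rightarrow> nat) \<Rightarrow> ('a, unit) tm set" where
  "Ctx Sig rk = {C. wf Sig rk {} True C \<and> nbot C = 1}"

definition gdelta :: "('q, 'p, 'a, 'd) dtla \<Rightarrow> ('a, unit) tm \<Rightarrow> 'p" where
  "gdelta M s = deltaE M (\<lambda>_. undefined) s"

definition gq :: "('q, 'p, 'a, 'd) dtla \<Rightarrow> 'q \<Rightarrow> ('a, unit) tm \<Rightarrow> ('d, unit) tm option" where
  "gq M q s = the_opt (qsem M (\<lambda>_. undefined) (\<lambda>_ _. Bot) q s)"

definition gM :: "('q, 'p, 'a, 'd) dtla \<Rightarrow> ('a, unit) tm \<Rightarrow> ('d, unit) tm option" where
  "gM M s = the_opt (msem M (\<lambda>_. undefined) (\<lambda>_ _. Bot) s)"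

text \<open>M(C[p]) \<in> T_\<Delta>(Q_M \<times> P_M): the hole leaf p is translated by q into \<langle>q,p\<rangle>.\<close>
definition MC :: "('q, 'p, 'a, 'd) dtla \<Rightarrow> ('a, 'p) tm \<Rightarrow> ('d, 'q \<times> 'p) tm option" where
  "MC M s = the_opt (msem M id (\<lambda>q p. Leaf (q, p)) s)"

definition la_uniform_wrt :: "'a set \<Rightarrow> ('a \<Rightarrow> nat) \<Rightarrow> ('q, 'p, 'a, 'd) dtla \<Rightarrow> ('q \<Rightarrow> 'p) \<Rightarrow> bool" where
  "la_uniform_wrt Sig rk M \<rho> \<longleftrightarrow>
     (\<forall>q\<in>Q M. \<rho> q \<in> P M) \<and>
     (\<forall>q\<in>Q M. {s \<in> GT Sig rk. gq M q s \<noteq> None} = {s \<in> GT Sig rk. gdelta M s = \<rho> q}) \<and>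
     (\<forall>p\<in>P M. \<forall>z\<in>leaves (Ax M p). \<rho> (fst z) = p) \<and>
     (\<forall>q\<in>Q M. \<forall>a\<in>Sig. \<forall>ps r. length ps = rk a \<and> set ps \<subseteq> P M \<and> rhs M q a ps = Some r
        \<longrightarrow> (\<forall>z\<in>leaves r. \<rho> (fst z) = ps ! (snd z - 1))) \<and>
     (\<forall>q\<in>Q M. \<forall>a\<in>Sig. \<forall>ps. length ps = rk a \<and> set ps \<subseteq> P M
        \<longrightarrow> (rhs M q a ps \<noteq> None \<longleftrightarrow> del M a ps = \<rho> q))"

definition la_uniform :: "'a set \<Rightarrow> ('a \<Rightarrow> nat) \<Rightarrow> ('q, 'p, 'a, 'd) dtla \<Rightarrow> bool" where
  "la_uniform Sig rk M \<longleftrightarrow> (\<exists>\<rho>. la_uniform_wrt Sig rk M \<rho>)"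

definition total :: "'a set \<Rightarrow> ('a \<Rightarrow> nat) \<Rightarrow> ('q, 'p, 'a, 'd) dtla \<Rightarrow> bool" where
  "total Sig rk M \<longleftrightarrow> (\<forall>s\<in>GT Sig rk. gM M s \<noteq> None)"

definition earliest :: "'a set \<Rightarrow> ('a \<Rightarrow> nat) \<Rightarrow> 'd set \<Rightarrow> ('q, 'p, 'a, 'd) dtla \<Rightarrow> bool" where
  "earliest Sig rk Dl M \<longleftrightarrow>
     \<not> (\<exists>q\<in>Q M. \<exists>d\<in>Dl. \<forall>s\<in>GT Sig rk. gq M q s \<noteq> None \<longrightarrow> (\<exists>us. gq M q s = Some (Sym d us)))"

definition reachable :: "'a set \<Rightarrow> ('a \<Rightarrow> nat) \<Rightarrow> ('q, 'p, 'a, 'd) dtla \<Rightarrow> 'q \<Rightarrow> bool" where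
  "reachable Sig rk M q \<longleftrightarrow>
     (\<exists>C\<in>Ctx Sig rk. \<exists>p\<in>P M. \<exists>t. MC M (plug C p) = Some t \<and> (q, p) \<in> leaves t)"

definition canonical :: "'a set \<Rightarrow> ('a \<Rightarrow> nat) \<Rightarrow> 'd set \<Rightarrow> ('d \<Rightarrow> nat)
    \<Rightarrow> ('q, 'p, 'a, 'd) dtla \<Rightarrow> bool" where
  "canonical Sig rkS Dl rkD M \<longleftrightarrow>
     is_dtla Sig rkS Dl rkD M \<and> total Sig rkS M \<and> la_uniform Sig rkS M \<and> earliest Sig rkS Dl M \<and>
     (\<forall>q\<in>Q M. reachable Sig rkS M q) \<and>
     (\<forall>q\<in>Q M. \<forall>q'\<in>Q M. q \<noteq> q' \<longrightarrow> (\<exists>s\<in>GT Sig rkS. gq M q s \<noteq> gq M q' s))"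

definition equivalent :: "'a set \<Rightarrow> ('a \<Rightarrow> nat) \<Rightarrow> ('q, 'p, 'a, 'd) dtla \<Rightarrow> ('q2, 'p2, 'a, 'd) dtla \<Rightarrow> bool" where
  "equivalent Sig rk M N \<longleftrightarrow> (\<forall>s\<in>GT Sig rk. gM M s = gM N s)"

text \<open>A dtop: single look-ahead state \<bottom>, represented by () :: unit.\<close>
definition is_dtop :: "('q, unit, 'a, 'd) dtla \<Rightarrow> bool" where
  "is_dtop N \<longleftrightarrow> P N = {()}"

definition is_dtpla :: "('q, 'p, 'a, 'd) dtla \<Rightarrow> bool" where
  "is_dtpla M \<longleftrightarrow> card (P M) \<ge> 2"

definition Omega :: "('q \<Rightarrow> 'p) \<Rightarrow> ('d, 'q \<times> nat) tm \<Rightarrow> ('d, 'q \<times> 'p) tm" where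
  "Omega \<rho> t = subst (\<lambda>z. Leaf (fst z, \<rho> (fst z))) t"

definition Phi :: "('d, 'q \<times> nat) tm \<Rightarrow> ('d, 'w) tm" where
  "Phi t = subst (\<lambda>_. Bot) t"

text \<open>\<phi> satisfies the defining property of the aheadness mapping from N to M:
M(C[p]) = N(C)[\<langle>q,\<bottom>\<rangle> \<leftarrow> \<phi>(q,p) | q \<in> Q_N] for all contexts C and p \<in> P_M.\<close>
definition is_aheadness :: "'a set \<Rightarrow> ('a \<Rightarrow> nat) \<Rightarrow> ('qM, 'p, 'a, 'd) dtla \<Rightarrow> ('qN, unit, 'a, 'd) dtla
    \<Rightarrow> ('qN \<Rightarrow> 'p \<Rightarrow> ('d, 'qM \<times> 'p) tm) \<Rightarrow> bool" where
  "is_aheadness Sig rk M N \<phi> \<longleftrightarrow>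
     (\<forall>C\<in>Ctx Sig rk. \<forall>p\<in>P M.
        MC M (plug C p) = map_option (subst (\<lambda>z. \<phi> (fst z) p)) (MC N (plug C ())))"

end

theory Submission
  imports Defs
begin

text \<open>Instantiating the defining property of \<phi> at the empty context gives
A_M(p)\<Omega> = A_N[q(x_0) \<leftarrow> \<phi>(q,p)] for every look-ahead state p. This yields (2) at once and
shows that A_N\<Phi> is a lower bound of the trees A_M(p)\<Omega>. It is the greatest one because at
every leaf q(x_0) of A_N the trees \<phi>(q,p), p \<in> P_M, have no common prefix other than \<bottom>:
they are not one and the same leaf, since the leaves of \<phi>(q,p) carry the look-ahead state p
and M has at least two look-ahead states; and they do not share a root symbol, since q_N(s)
is an instance of \<phi>(q,\<delta>_M(s)) for every input s, which would contradict earliness of N.\<close>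

lemma below_refl: "below t t"
proof (induction t)
  case (Sym f ts) thus ?case by (auto intro!: below.intros simp: list_all2_same)
qed (auto intro: below.intros)

lemma below_Bot_iff: "below g Bot \<longleftrightarrow> g = Bot"
  by (auto elim: below.cases intro: below.intros)

lemma below_antisym: "below a b \<Longrightarrow> below b a \<Longrightarrow> a = b"
proof (induction rule: below.induct)
  case (1 t) thus ?case by (simp add: below_Bot_iff)
next
  case (2 z) thus ?case by simp
next
  case (3 ts us f)
  from 3(2) have "list_all2 below us ts" by (auto elim: below.cases)
  with 3(1) have "ts = us"
    by (auto simp: list_all2_conv_all_nth intro: nth_equalityI)
  thus ?case by simp
qed

lemma glb_eqI:
  assumes "\<forall>t\<in>T. below g t" and "\<forall>g'. (\<forall>t\<in>T. below g' t) \<longrightarrow> below g' g"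
  shows "glb T = g"
  unfolding glb_def
proof (rule the_equality)
  fix g2 assume "(\<forall>t\<in>T. below g2 t) \<and> (\<forall>g'. (\<forall>t\<in>T. below g' t) \<longrightarrow> below g' g2)"
  with assms show "g2 = g" by (blast intro: below_antisym)
qed (use assms in blast)

lemma subst_subst: "subst \<sigma> (subst \<tau> t) = subst (\<lambda>z. subst \<sigma> (\<tau> z)) t"
  by (induction t) auto

lemma subst_cong: "(\<forall>z\<in>leaves t. \<sigma> z = \<tau> z) \<Longrightarrow> subst \<sigma> t = subst \<tau> t"
  by (induction t) auto

lemma subst_eq_leafD: "subst \<sigma> t = subst \<tau> t \<Longrightarrow> z \<in> leaves t \<Longrightarrow> \<sigma> z = \<tau> z"
  by (induction t) auto

lemma leaves_subst: "leaves (subst \<sigma> t) = (\<Union>z\<in>leaves t. leaves (\<sigma> z))"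
  by (induction t) auto

lemma subt_subst_Leaf: "subt t v = Some (Leaf z) \<Longrightarrow> subt (subst \<sigma> t) v = Some (\<sigma> z)"
proof (induction v arbitrary: t)
  case (Cons i v) thus ?case by (cases t) (auto split: if_splits)
qed simp

lemma wf_leaves: "wf F r Z b t \<Longrightarrow> z \<in> leaves t \<Longrightarrow> z \<in> Z"
  by (induction t) auto

lemma wf_subst: "wf F r Z b t \<Longrightarrow> \<forall>z\<in>leaves t. wf F r Z' b (\<sigma> z) \<Longrightarrow> wf F r Z' b (subst \<sigma> t)"
  by (induction t) auto

lemma wf_subst_leafD: "wf F r Z b (subst \<sigma> t) \<Longrightarrow> z \<in> leaves t \<Longrightarrow> wf F r Z b (\<sigma> z)"
  by (induction t) auto

lemma below_subst_Bot: "below (subst (\<lambda>_. Bot) t) (subst \<sigma> t)"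
proof (induction t)
  case (Sym f ts) thus ?case by (auto intro!: below.intros simp: list_all2_conv_all_nth)
qed (auto intro: below.intros below_refl)

lemma below_subst_BotI:
  assumes "\<forall>z\<in>leaves t. \<forall>g. (\<forall>p\<in>PP. below g (\<sigma> p z)) \<longrightarrow> g = Bot"
    and "PP \<noteq> {}" and "\<forall>p\<in>PP. below g (subst (\<sigma> p) t)"
  shows "below g (subst (\<lambda>_. Bot) t)"
  using assms
proof (induction t arbitrary: g)
  case Bot thus ?case by (auto simp: below_Bot_iff intro: below.intros)
next
  case (Leaf z) thus ?case by (auto intro: below.intros)
next
  case (Sym f ts)
  obtain p0 where p0: "p0 \<in> PP" using \<open>PP \<noteq> {}\<close> by blast
  show ?case
  proof (cases g)
    case (Leaf w)
    with Sym.prems(3) p0 show ?thesis by (auto elim: below.cases)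
  next
    case (Sym f' gs)
    have args: "f' = f \<and> list_all2 below gs (map (subst (\<sigma> p)) ts)" if "p \<in> PP" for p
      using Sym.prems(3) that \<open>g = Sym f' gs\<close> by (auto elim: below.cases)
    have len: "length gs = length ts"
      using args[OF p0] by (auto dest: list_all2_lengthD)
    have "below (gs ! i) (subst (\<lambda>_. Bot) (ts ! i))" if i: "i < length ts" for i
    proof (rule Sym.IH[OF nth_mem[OF i]])
      show "\<forall>p\<in>PP. below (gs ! i) (subst (\<sigma> p) (ts ! i))"
      proof
        fix p assume "p \<in> PP"
        from list_all2_nthD[OF conjunct2[OF args[OF this]]] i len
        show "below (gs ! i) (subst (\<sigma> p) (ts ! i))" by simp
      qed
    qed (use Sym.prems(1,2) nth_mem[OF i] in auto)
    with len have "list_all2 below gs (map (subst (\<lambda>_. Bot)) ts)"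
      by (simp add: list_all2_conv_all_nth)
    with \<open>g = Sym f' gs\<close> args[OF p0] show ?thesis by (auto intro: below.intros)
  qed (auto intro: below.intros)
qed

lemma glb_subst_eq_subst_Bot:
  assumes "PP \<noteq> {}" and "\<forall>z\<in>leaves t. \<forall>g. (\<forall>p\<in>PP. below g (\<sigma> p z)) \<longrightarrow> g = Bot"
  shows "glb ((\<lambda>p. subst (\<sigma> p) t) ` PP) = subst (\<lambda>_. Bot) t"
  using assms by (intro glb_eqI) (auto intro: below_subst_Bot below_subst_BotI)

lemma qsem_det: "qsem X \<eta> hol q s t1 \<Longrightarrow> qsem X \<eta> hol q s t2 \<Longrightarrow> t1 = t2"
proof (induction arbitrary: t2 rule: qsem.induct)
  case (leaf q h) thus ?case by (auto elim: qsem.cases)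
next
  case (node q a ss r \<sigma>)
  from node.prems show ?case
  proof (cases rule: qsem.cases)
    case (node r' \<sigma>')
    with node.hyps(1) node.IH show ?thesis by (auto intro!: subst_cong)
  qed
qed

lemma msem_det: "msem X \<eta> hol s t1 \<Longrightarrow> msem X \<eta> hol s t2 \<Longrightarrow> t1 = t2"
  unfolding msem_def by (auto intro!: subst_cong dest: qsem_det)

lemma the_opt_SomeD: "the_opt R = Some t \<Longrightarrow> (\<And>a b. R a \<Longrightarrow> R b \<Longrightarrow> a = b) \<Longrightarrow> R t"
  unfolding the_opt_def by (auto split: if_splits intro: theI)

lemma the_opt_SomeI: "R t \<Longrightarrow> (\<And>a b. R a \<Longrightarrow> R b \<Longrightarrow> a = b) \<Longrightarrow> the_opt R = Some t"
  unfolding the_opt_def by (auto intro: the_equality)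

lemma gM_SomeD: "gM X s = Some t \<Longrightarrow> msem X (\<lambda>_. undefined) (\<lambda>_ _. Bot) s t"
  unfolding gM_def by (erule the_opt_SomeD) (rule msem_det)

lemma gq_SomeI: "qsem X (\<lambda>_. undefined) (\<lambda>_ _. Bot) q s t \<Longrightarrow> gq X q s = Some t"
  unfolding gq_def by (erule the_opt_SomeI) (rule qsem_det)

lemma MC_Leaf: "MC X (Leaf p) = Some (subst (\<lambda>z. Leaf (fst z, p)) (Ax X p))"
  unfolding MC_def
proof (rule the_opt_SomeI)
  show "msem X id (\<lambda>q p. Leaf (q, p)) (Leaf p) (subst (\<lambda>z. Leaf (fst z, p)) (Ax X p))"
    unfolding msem_def by (auto intro!: exI[of _ "\<lambda>z. Leaf (fst z, p)"] qsem.leaf)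
qed (rule msem_det)

lemma deltaE_in_P: "is_dtla Sig rk Dl rkD X \<Longrightarrow> wf Sig rk {} False s \<Longrightarrow> deltaE X \<eta> s \<in> P X"
proof (induction s)
  case (Sym a ss)
  hence "set (map (deltaE X \<eta>) ss) \<subseteq> P X" by auto
  with Sym.prems show ?case unfolding is_dtla_def by auto
qed auto

lemma leaves_Ax_dtop_in_Q:
  "is_dtla Sig rk Dl rkD N \<Longrightarrow> is_dtop N \<Longrightarrow> z \<in> leaves (Ax N ()) \<Longrightarrow> fst z \<in> Q N"
  unfolding is_dtla_def is_dtop_def by (auto dest: wf_leaves)

lemma Omega_Ax_aheadness:
  assumes "is_aheadness Sig rk M N \<phi>" and "la_uniform_wrt Sig rk M \<rho>" and "p \<in> P M"
  shows "Omega \<rho> (Ax M p) = subst (\<lambda>z. \<phi> (fst z) p) (Ax N ())"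
proof -
  have "(Bot :: ('a, unit) tm) \<in> Ctx Sig rk" by (simp add: Ctx_def)
  with assms(1,3) have "MC M (plug (Bot :: ('a, unit) tm) p)
      = map_option (subst (\<lambda>z. \<phi> (fst z) p)) (MC N (plug (Bot :: ('a, unit) tm) ()))"
    unfolding is_aheadness_def by blast
  hence "subst (\<lambda>z. Leaf (fst z, p)) (Ax M p) = subst (\<lambda>z. \<phi> (fst z) p) (Ax N ())"
    by (simp add: MC_Leaf subst_subst)
  moreover have "Omega \<rho> (Ax M p) = subst (\<lambda>z. Leaf (fst z, p)) (Ax M p)"
    using assms(2,3) unfolding Omega_def la_uniform_wrt_def by (auto intro!: subst_cong)
  ultimately show ?thesis by simp
qed

lemma aheadness_leaf_state:
  assumes "is_aheadness Sig rk M N \<phi>" and "la_uniform_wrt Sig rk M \<rho>" and "p \<in> P M"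
    and "(q, i) \<in> leaves (Ax N ())" and "w \<in> leaves (\<phi> q p)"
  shows "snd w = p"
proof -
  have "w \<in> leaves (subst (\<lambda>z. \<phi> (fst z) p) (Ax N ()))"
    using assms(4,5) by (auto simp: leaves_subst intro!: bexI[of _ "(q, i)"])
  hence "w \<in> leaves (Omega \<rho> (Ax M p))"
    using Omega_Ax_aheadness[OF assms(1-3)] by simp
  with assms(2,3) show ?thesis
    unfolding Omega_def la_uniform_wrt_def by (auto simp: leaves_subst)
qed

lemma gq_eq_subst_aheadness:
  fixes M :: "('qM, 'p, 'a, 'd) dtla"
  assumes "is_dtla Sig rk Dl rkD M" and "total Sig rk N" and "equivalent Sig rk M N"
    and "is_aheadness Sig rk M N \<phi>" and "la_uniform_wrt Sig rk M \<rho>"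
    and "s \<in> GT Sig rk" and "(q, i) \<in> leaves (Ax N ())"
  shows "\<exists>\<tau>. gq N q s = Some (subst \<tau> (\<phi> q (gdelta M s)))"
proof -
  let ?p = "gdelta M s"
  have p: "?p \<in> P M"
    using deltaE_in_P[OF assms(1)] assms(6) unfolding GT_def gdelta_def by blast
  obtain t where "gM N s = Some t" using assms(2,6) unfolding total_def by blast
  moreover have "gM M s = gM N s" using assms(3,6) unfolding equivalent_def by blast
  ultimately have mN: "msem N (\<lambda>_. undefined) (\<lambda>_ _. Bot) s t"
    and mM: "msem M (\<lambda>_. undefined) (\<lambda>_ _. Bot) s t" by (auto dest: gM_SomeD)
  from mN obtain \<sigma>N where
    qN: "\<forall>z\<in>leaves (Ax N ()). qsem N (\<lambda>_. undefined) (\<lambda>_ _. Bot) (fst z) s (\<sigma>N z)"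
    and tN: "t = subst \<sigma>N (Ax N ())"
    unfolding msem_def by auto
  from mM obtain \<sigma>M where tM: "t = subst \<sigma>M (Ax M ?p)"
    unfolding msem_def gdelta_def by auto
  define \<tau> where "\<tau> x = \<sigma>M (fst x, 0)" for x :: "'qM \<times> 'p"
  have "\<forall>z\<in>leaves (Ax M ?p). snd z = 0"
    using assms(1) p unfolding is_dtla_def by (fastforce dest: wf_leaves)
  hence "subst \<tau> (Omega \<rho> (Ax M ?p)) = t"
    unfolding tM Omega_def subst_subst \<tau>_def by (auto intro!: subst_cong)
  hence "subst (\<lambda>z. subst \<tau> (\<phi> (fst z) ?p)) (Ax N ()) = subst \<sigma>N (Ax N ())"
    using Omega_Ax_aheadness[OF assms(4,5) p] tN by (simp add: subst_subst)
  from subst_eq_leafD[OF this assms(7)] have "subst \<tau> (\<phi> q ?p) = \<sigma>N (q, i)" by simp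
  moreover from bspec[OF qN assms(7)] have "gq N q s = Some (\<sigma>N (q, i))"
    by (intro gq_SomeI) simp
  ultimately show ?thesis by (intro exI[of _ \<tau>]) simp
qed

lemma aheadness_lower_bound_Bot:
  assumes "is_dtla Sig rk Dl rkD M" and "total Sig rk N" and "earliest Sig rk Dl N"
    and "equivalent Sig rk M N" and "is_aheadness Sig rk M N \<phi>" and "la_uniform_wrt Sig rk M \<rho>"
    and "is_dtpla M" and "q \<in> Q N" and "(q, i) \<in> leaves (Ax N ())"
    and "\<forall>p\<in>P M. below g (\<phi> q p)"
  shows "g = Bot"
proof (cases g)
  case (Leaf w)
  hence eq: "\<phi> q p = Leaf w" if "p \<in> P M" for p
    using assms(10) that by (auto elim: below.cases)
  have "2 \<le> card (P M)" using assms(7) unfolding is_dtpla_def .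
  hence "finite (P M)" and "\<not> card (P M) \<le> Suc 0" by (auto intro: card_ge_0_finite)
  then obtain p1 p2 where "p1 \<in> P M" "p2 \<in> P M" "p1 \<noteq> p2"
    by (auto simp: card_le_Suc0_iff_eq)
  moreover have "snd w = p" if "p \<in> P M" for p
    using aheadness_leaf_state[OF assms(5,6) that assms(9)] eq[OF that] by simp
  ultimately show ?thesis by (metis (no_types))
next
  case (Sym f gs)
  hence root: "\<exists>us. \<phi> q p = Sym f us" if "p \<in> P M" for p
    using assms(10) that by (auto elim: below.cases)
  obtain p0 where p0: "p0 \<in> P M" using assms(1) unfolding is_dtla_def by blast
  have "wf Dl rkD UNIV False (Omega \<rho> (Ax M p0))"
    using assms(1) p0 unfolding Omega_def is_dtla_def by (auto intro!: wf_subst)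
  hence "wf Dl rkD UNIV False (subst (\<lambda>z. \<phi> (fst z) p0) (Ax N ()))"
    using Omega_Ax_aheadness[OF assms(5,6) p0] by simp
  from wf_subst_leafD[OF this assms(9)] root[OF p0] have "f \<in> Dl" by auto
  moreover have "\<exists>us. gq N q s = Some (Sym f us)" if "s \<in> GT Sig rk" for s
  proof -
    have "gdelta M s \<in> P M"
      using deltaE_in_P[OF assms(1)] that unfolding GT_def gdelta_def by blast
    with root gq_eq_subst_aheadness[OF assms(1,2,4,5,6) that assms(9)] show ?thesis by force
  qed
  ultimately show ?thesis using assms(3,8) unfolding earliest_def by blast
qed

theorem mainTheorem7:
  fixes Sig :: "'a set" and rkS :: "'a \<Rightarrow> nat" and Dl :: "'d set" and rkD :: "'d \<Rightarrow> nat"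
    and M :: "('qM, 'p, 'a, 'd) dtla" and N :: "('qN, unit, 'a, 'd) dtla"
    and \<rho> :: "'qM \<Rightarrow> 'p" and \<phi> :: "'qN \<Rightarrow> 'p \<Rightarrow> ('d, 'qM \<times> 'p) tm"
  assumes "finite Sig" and "finite Dl"
    and "canonical Sig rkS Dl rkD M" and "canonical Sig rkS Dl rkD N"
    and "is_dtpla M" and "is_dtop N"
    and "equivalent Sig rkS M N"
    and "la_uniform_wrt Sig rkS M \<rho>"
    and "is_aheadness Sig rkS M N \<phi>"
  shows "Phi (Ax N ()) = glb ((\<lambda>p. Omega \<rho> (Ax M p)) ` P M)
         \<and> (\<forall>v q p. q \<in> Q N \<longrightarrow> p \<in> P M \<longrightarrow> subt (Ax N ()) v = Some (Leaf (q, 0))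
           \<longrightarrow> subt (Omega \<rho> (Ax M p)) v = Some (\<phi> q p))"
proof -
  have M: "is_dtla Sig rkS Dl rkD M" and N: "is_dtla Sig rkS Dl rkD N"
    and "total Sig rkS N" and "earliest Sig rkS Dl N"
    using assms(3,4) unfolding canonical_def by auto
  have Omega_Ax: "Omega \<rho> (Ax M p) = subst (\<lambda>z. \<phi> (fst z) p) (Ax N ())" if "p \<in> P M" for p
    using Omega_Ax_aheadness[OF assms(9,8) that] .
  have "\<forall>z\<in>leaves (Ax N ()). \<forall>g. (\<forall>p\<in>P M. below g (\<phi> (fst z) p)) \<longrightarrow> g = Bot"
    using aheadness_lower_bound_Bot[OF M \<open>total _ _ N\<close> \<open>earliest _ _ _ N\<close> assms(7,9,8,5)]
      leaves_Ax_dtop_in_Q[OF N assms(6)] by (metis prod.collapse)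
  moreover have "P M \<noteq> {}" using M unfolding is_dtla_def by blast
  ultimately have "glb ((\<lambda>p. Omega \<rho> (Ax M p)) ` P M) = Phi (Ax N ())"
    unfolding Phi_def using glb_subst_eq_subst_Bot[of "P M" "Ax N ()" "\<lambda>p z. \<phi> (fst z) p"]
    by (simp add: Omega_Ax cong: image_cong)
  moreover have "subt (Omega \<rho> (Ax M p)) v = Some (\<phi> q p)"
    if "p \<in> P M" and "subt (Ax N ()) v = Some (Leaf (q, 0))" for v q p
    using subt_subst_Leaf[OF that(2), of "\<lambda>z. \<phi> (fst z) p"] Omega_Ax[OF that(1)] by simp
  ultimately show ?thesis by auto
qed

end
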